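(* Let $a>0$ and let $Y^{(1)},Y^{(2)}$ be independent $\chi^2_1$ random variables. Then the cdf $H(u)=P(Y^{(1)}+aY^{(2)}\le u)$ is concave on $(0,\infty)$. *)

theory Defs
  imports "HOL-Probability.Probability"
begin

definition chi2_1_density :: "real \<Rightarrow> real" where
  "chi2_1_density y = (if y > 0 then exp (- y / 2) / sqrt (2 * pi * y) else 0)"

end

theory Submission
  imports Defs
begin

(* Substituting y = s t / a in the convolution integral shows that for s > 0 the density of
   Y1 + a Y2 is a mixture of exponentials,
       h(s) = int_0^1 w(t) exp (- s r(t)) dt,
       w(t) = 1 / (2 pi sqrt a sqrt (t (1 - t))),   r(t) = (1 - t)/2 + t/(2 a),
   and h vanishes for s <= 0.  Integrating over (0, u] and swapping the integrals gives
       H(u) = int_0^1 w(t) (1 - exp (- u r(t))) / r(t) dt      (u > 0).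
   For each fixed t the integrand is a nonnegative multiple of the concave function
   u |-> (1 - exp (- u c)) / c, and a pointwise integral of concave functions is concave. *)

lemma chi2_1_density_measurable [measurable]: "chi2_1_density \<in> borel_measurable borel"
  unfolding chi2_1_density_def by measurable

lemma chi2_1_density_nonneg: "chi2_1_density y \<ge> 0"
  unfolding chi2_1_density_def by auto

definition weighted_convolution :: "(real \<Rightarrow> real) \<Rightarrow> (real \<Rightarrow> real) \<Rightarrow> real \<Rightarrow> real \<Rightarrow> ennreal" where
  "weighted_convolution f1 f2 a s = (\<integral>\<^sup>+y. ennreal (f1 (s - a * y) * f2 y) \<partial>lborel)"

text \<open>Independence only depends on the measurable sets, so it can be transferred from \<open>borel\<close>
  to \<open>lborel\<close>, the form in which the joint-density theorem expects it.\<close>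
lemma indep_var_lborel:
  fixes Y1 Y2 :: "'s \<Rightarrow> real"
  assumes "prob_space M" and "prob_space.indep_var M borel Y1 borel Y2"
  shows "prob_space.indep_var M lborel Y1 lborel Y2"
proof -
  have "(case i of True \<Rightarrow> lborel | False \<Rightarrow> lborel) = (lborel::real measure)"
    and "(case i of True \<Rightarrow> borel | False \<Rightarrow> borel) = (borel::real measure)" for i
    by (cases i; simp)+
  then show ?thesis
    using assms by (simp add: prob_space.indep_var_def prob_space.indep_vars_def2)
qed

text \<open>This is the change of variables \<open>s = x + a y\<close> in the joint density followed by Tonelli.\<close>
lemma cdf_weighted_sum_indep:
  fixes M :: "'s measure" and Y1 Y2 :: "'s \<Rightarrow> real" and f1 f2 :: "real \<Rightarrow> real" and a u :: real
  assumes "prob_space M"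
    and f1 [measurable]: "f1 \<in> borel_measurable borel" and f1_nonneg: "\<And>y. f1 y \<ge> 0"
    and f2 [measurable]: "f2 \<in> borel_measurable borel" and f2_nonneg: "\<And>y. f2 y \<ge> 0"
    and D1: "distributed M lborel Y1 (\<lambda>y. ennreal (f1 y))"
    and D2: "distributed M lborel Y2 (\<lambda>y. ennreal (f2 y))"
    and indep: "prob_space.indep_var M borel Y1 borel Y2"
  shows "emeasure M {\<omega> \<in> space M. Y1 \<omega> + a * Y2 \<omega> \<le> u}
           = (\<integral>\<^sup>+s. weighted_convolution f1 f2 a s * indicator {..u} s \<partial>lborel)"
proof -
  interpret prob_space M by fact
  have joint: "distributed M (lborel \<Otimes>\<^sub>M lborel) (\<lambda>x. (Y1 x, Y2 x))
      (\<lambda>(x, y). ennreal (f1 x) * ennreal (f2 y))"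
    by (rule distributed_joint_indep[OF sigma_finite_lborel sigma_finite_lborel D1 D2 indep_var_lborel[OF assms(1) indep]])
  define A where "A = {p \<in> space (lborel \<Otimes>\<^sub>M lborel). fst p + a * snd p \<le> u}"
  have A: "A \<in> sets (lborel \<Otimes>\<^sub>M lborel)" unfolding A_def by measurable
  have "{\<omega> \<in> space M. Y1 \<omega> + a * Y2 \<omega> \<le> u} = (\<lambda>x. (Y1 x, Y2 x)) -` A \<inter> space M"
    unfolding A_def by (auto simp: space_pair_measure)
  then have "emeasure M {\<omega> \<in> space M. Y1 \<omega> + a * Y2 \<omega> \<le> u}
      = (\<integral>\<^sup>+p. (\<lambda>(x, y). ennreal (f1 x) * ennreal (f2 y)) p * indicator A p \<partial>(lborel \<Otimes>\<^sub>M lborel))"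
    using distributed_emeasure[OF joint A] by simp
  also have "\<dots> = (\<integral>\<^sup>+p. ennreal (f1 (fst p) * f2 (snd p) * indicator {..u} (fst p + a * snd p))
      \<partial>(lborel \<Otimes>\<^sub>M lborel))"
    by (intro nn_integral_cong)
      (auto simp: A_def space_pair_measure ennreal_mult f1_nonneg f2_nonneg indicator_def)
  also have "\<dots> = (\<integral>\<^sup>+y. \<integral>\<^sup>+x. ennreal (f1 x * f2 y * indicator {..u} (x + a * y)) \<partial>lborel \<partial>lborel)"
    by (subst lborel_pair.nn_integral_snd[symmetric]) measurable
  also have "\<dots> = (\<integral>\<^sup>+y. \<integral>\<^sup>+s. ennreal (f1 (s - a * y) * f2 y * indicator {..u} s) \<partial>lborel \<partial>lborel)"
  proof (rule nn_integral_cong)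
    fix y :: real
    show "(\<integral>\<^sup>+x. ennreal (f1 x * f2 y * indicator {..u} (x + a * y)) \<partial>lborel)
        = (\<integral>\<^sup>+s. ennreal (f1 (s - a * y) * f2 y * indicator {..u} s) \<partial>lborel)"
      using nn_integral_real_affine[where c = 1 and t = "- a * y"
          and f = "\<lambda>x. ennreal (f1 x * f2 y * indicator {..u} (x + a * y))"]
      by simp
  qed
  also have "\<dots> = (\<integral>\<^sup>+s. \<integral>\<^sup>+y. ennreal (f1 (s - a * y) * f2 y * indicator {..u} s) \<partial>lborel \<partial>lborel)"
    by (rule lborel_pair.Fubini') measurable
  also have "\<dots> = (\<integral>\<^sup>+s. weighted_convolution f1 f2 a s * indicator {..u} s \<partial>lborel)"
    unfolding weighted_convolution_def
    by (intro nn_integral_cong, subst nn_integral_multc[symmetric])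
      (auto intro!: nn_integral_cong simp: indicator_def)
  finally show ?thesis .
qed

lemma concave_on_nn_integral_family:
  fixes H :: "real \<Rightarrow> real" and G :: "real \<Rightarrow> 'a \<Rightarrow> real" and N :: "'a measure"
  assumes "convex I"
    and rep: "\<And>u. u \<in> I \<Longrightarrow> ennreal (H u) = (\<integral>\<^sup>+t. ennreal (G u t) \<partial>N)"
    and H_nonneg: "\<And>u. u \<in> I \<Longrightarrow> H u \<ge> 0"
    and G_nonneg: "\<And>u t. u \<in> I \<Longrightarrow> G u t \<ge> 0"
    and G_measurable: "\<And>u. u \<in> I \<Longrightarrow> (\<lambda>t. G u t) \<in> borel_measurable N"
    and G_concave: "\<And>t. concave_on I (\<lambda>u. G u t)"
  shows "concave_on I H"
  unfolding concave_on_iff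
proof (intro conjI ballI allI impI)
  show "convex I" by fact
  fix x y p q :: real
  assume x: "x \<in> I" and y: "y \<in> I" and p: "p \<ge> 0" and q: "q \<ge> 0" and pq: "p + q = 1"
  define z where "z = p *\<^sub>R x + q *\<^sub>R y"
  have z: "z \<in> I" unfolding z_def using \<open>convex I\<close> x y p q pq by (rule convexD)
  have "ennreal (p * H x + q * H y) = ennreal p * ennreal (H x) + ennreal q * ennreal (H y)"
    using p q x y H_nonneg by (simp add: ennreal_plus ennreal_mult)
  also have "\<dots> = (\<integral>\<^sup>+t. ennreal p * ennreal (G x t) + ennreal q * ennreal (G y t) \<partial>N)"
    using x y G_measurable by (simp add: rep nn_integral_add nn_integral_cmult)
  also have "\<dots> \<le> (\<integral>\<^sup>+t. ennreal (G z t) \<partial>N)"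
  proof (rule nn_integral_mono)
    fix t
    have "p * G x t + q * G y t \<le> G z t"
      using concave_on_iff[THEN iffD1, OF G_concave[of t]] x y p q pq by (auto simp: z_def)
    moreover have "ennreal p * ennreal (G x t) + ennreal q * ennreal (G y t)
        = ennreal (p * G x t + q * G y t)"
      using p q x y G_nonneg by (simp add: ennreal_plus ennreal_mult)
    ultimately show "ennreal p * ennreal (G x t) + ennreal q * ennreal (G y t) \<le> ennreal (G z t)"
      by (simp add: ennreal_leI)
  qed
  also have "\<dots> = ennreal (H z)" using z by (simp add: rep)
  finally show "p * H x + q * H y \<le> H (p *\<^sub>R x + q *\<^sub>R y)"
    using z H_nonneg by (simp add: z_def ennreal_le_iff)
qed

text \<open>The integral \<open>\<integral>\<^sub>0\<^sup>u exp (- s c) ds\<close> of an exponential, as a function of the upper limit.\<close>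
definition truncated_exp_integral :: "real \<Rightarrow> real \<Rightarrow> real" where
  "truncated_exp_integral c u = (1 - exp (- u * c)) / c"

lemma truncated_exp_integral_nonneg:
  assumes "c > 0" and "u \<ge> 0"
  shows "truncated_exp_integral c u \<ge> 0"
  using assms by (simp add: truncated_exp_integral_def)

text \<open>Concavity of \<open>u \<mapsto> (1 - exp (- u c)) / c\<close>: its negative is, up to a constant, the convex
  function \<open>exp (- u c) / c\<close>.\<close>
lemma truncated_exp_integral_concave:
  assumes "c > 0"
  shows "concave_on UNIV (truncated_exp_integral c)"
proof -
  have "convex_on UNIV (\<lambda>u. exp (- u * c))"
    by (rule convex_on_realI[where f' = "\<lambda>u. - c * exp (- u * c)"])
      (use assms in \<open>auto intro!: derivative_eq_intros\<close>)
  then have "convex_on UNIV (\<lambda>u. exp (- u * c) / c + (- 1 / c))"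
    using assms by (intro convex_on_add convex_on_cdiv) (auto simp: convex_on_const)
  then show ?thesis
    unfolding concave_on_def truncated_exp_integral_def by (simp add: diff_divide_distrib)
qed

lemma nn_integral_exp_Ioc:
  assumes "c > 0" and "u \<ge> 0"
  shows "(\<integral>\<^sup>+s. ennreal (exp (- s * c)) * indicator {0<..u} s \<partial>lborel)
           = ennreal (truncated_exp_integral c u)"
proof -
  have "(\<integral>\<^sup>+s. ennreal (exp (- s * c)) * indicator {0<..u} s \<partial>lborel)
      = (\<integral>\<^sup>+s. ennreal (exp (- s * c)) * indicator {0..u} s \<partial>lborel)"
    using AE_lborel_singleton[of 0]
    by (intro nn_integral_cong_AE, eventually_elim) (auto simp: indicator_def)
  also have "\<dots> = ennreal ((- exp (- u * c) / c) - (- exp (- 0 * c) / c))"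
    by (rule nn_integral_FTC_Icc) (use assms in \<open>auto intro!: derivative_eq_intros\<close>)
  also have "\<dots> = ennreal (truncated_exp_integral c u)"
    by (simp add: truncated_exp_integral_def diff_divide_distrib)
  finally show ?thesis .
qed

text \<open>Weight and exponential rate in the mixture representation of the density of \<open>Y1 + a * Y2\<close>;
  the weight is supported on \<open>(0, 1)\<close>, where the rate lies between \<open>1/2\<close> and \<open>1/(2 a)\<close>.\<close>
definition arcsine_weight :: "real \<Rightarrow> real \<Rightarrow> real" where
  "arcsine_weight a t = indicator {0<..<1} t / (2 * pi * sqrt a * sqrt (t * (1 - t)))"

definition mixing_rate :: "real \<Rightarrow> real \<Rightarrow> real" where
  "mixing_rate a t = (1 - t) / 2 + t / (2 * a)"

lemma arcsine_weight_measurable [measurable]: "arcsine_weight a \<in> borel_measurable borel"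
  unfolding arcsine_weight_def by measurable

lemma mixing_rate_measurable [measurable]: "mixing_rate a \<in> borel_measurable borel"
  unfolding mixing_rate_def by measurable

lemma arcsine_weight_nonneg: "a > 0 \<Longrightarrow> arcsine_weight a t \<ge> 0"
  unfolding arcsine_weight_def by (auto simp: indicator_def)

lemma arcsine_weight_outside: "\<not> (0 < t \<and> t < 1) \<Longrightarrow> arcsine_weight a t = 0"
  unfolding arcsine_weight_def by simp

lemma mixing_rate_pos: "a > 0 \<Longrightarrow> 0 < t \<Longrightarrow> t < 1 \<Longrightarrow> mixing_rate a t > 0"
  unfolding mixing_rate_def by (auto intro!: add_pos_pos)

text \<open>The integrand of the convolution after the substitution \<open>y = s t / a\<close> (Jacobian \<open>s / a\<close>):
  the square roots combine to \<open>sqrt (t (1 - t))\<close> and the exponentials to \<open>exp (- s r(t))\<close>.\<close>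
lemma chi2_1_product_substituted:
  fixes a s t :: real
  assumes a: "a > 0" and s: "s > 0" and t: "0 < t" "t < 1"
  shows "s / a * (chi2_1_density (s * (1 - t)) * chi2_1_density (s * t / a))
           = arcsine_weight a t * exp (- s * mixing_rate a t)"
proof -
  have pos: "s * (1 - t) > 0" "s * t / a > 0" using t a s by auto
  have roots: "sqrt (2 * pi * (s * (1 - t))) * sqrt (2 * pi * (s * t / a))
      = (2 * pi * s) * sqrt (t * (1 - t)) / sqrt a"
  proof -
    have "sqrt (2 * pi * (s * (1 - t))) * sqrt (2 * pi * (s * t / a))
        = sqrt ((2 * pi * s)\<^sup>2 * (t * (1 - t)) / a)"
      by (simp add: real_sqrt_mult[symmetric] power2_eq_square field_simps)
    also have "\<dots> = (2 * pi * s) * sqrt (t * (1 - t)) / sqrt a"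
      using s by (simp add: real_sqrt_mult real_sqrt_divide)
    finally show ?thesis .
  qed
  have exps: "exp (- (s * (1 - t)) / 2) * exp (- (s * t / a) / 2) = exp (- s * mixing_rate a t)"
    by (simp add: mixing_rate_def exp_add[symmetric] field_simps)
  have "s / a * (chi2_1_density (s * (1 - t)) * chi2_1_density (s * t / a))
      = s / a * (exp (- (s * (1 - t)) / 2) * exp (- (s * t / a) / 2))
          / (sqrt (2 * pi * (s * (1 - t))) * sqrt (2 * pi * (s * t / a)))"
    unfolding chi2_1_density_def using pos by simp
  also have "\<dots> = s / a * exp (- s * mixing_rate a t) / ((2 * pi * s) * sqrt (t * (1 - t)) / sqrt a)"
    unfolding exps roots ..
  also have "\<dots> = arcsine_weight a t * exp (- s * mixing_rate a t)"
  proof -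
    have "sqrt a * sqrt a = a" "sqrt (t * (1 - t)) > 0" using a t by simp_all
    then show ?thesis using t a s pi_gt_zero by (simp add: arcsine_weight_def field_simps)
  qed
  finally show ?thesis .
qed

lemma chi2_1_convolution_pos:
  assumes a: "a > 0" and s: "s > 0"
  shows "weighted_convolution chi2_1_density chi2_1_density a s
           = (\<integral>\<^sup>+t. ennreal (arcsine_weight a t * exp (- s * mixing_rate a t)) \<partial>lborel)"
proof -
  have "weighted_convolution chi2_1_density chi2_1_density a s
      = ennreal \<bar>s / a\<bar> * (\<integral>\<^sup>+t. ennreal (chi2_1_density (s - a * (0 + s / a * t))
                                    * chi2_1_density (0 + s / a * t)) \<partial>lborel)"
    unfolding weighted_convolution_def
    by (rule nn_integral_real_affine) (use a s in auto)
  also have "\<dots> = (\<integral>\<^sup>+t. ennreal (s / a * (chi2_1_density (s * (1 - t)) * chi2_1_density (s * t / a)))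
      \<partial>lborel)"
  proof -
    have "s - a * (0 + s / a * t) = s * (1 - t)" "0 + s / a * t = s * t / a" for t
      using a by (auto simp: field_simps)
    then show ?thesis
      using a s by (subst nn_integral_cmult[symmetric])
        (auto intro!: nn_integral_cong simp: chi2_1_density_nonneg ennreal_mult[symmetric])
  qed
  also have "\<dots> = (\<integral>\<^sup>+t. ennreal (arcsine_weight a t * exp (- s * mixing_rate a t)) \<partial>lborel)"
  proof (rule nn_integral_cong)
    fix t :: real
    show "ennreal (s / a * (chi2_1_density (s * (1 - t)) * chi2_1_density (s * t / a)))
        = ennreal (arcsine_weight a t * exp (- s * mixing_rate a t))"
    proof (cases "0 < t \<and> t < 1")
      case True
      then show ?thesis using chi2_1_product_substituted[OF a s] by simp
    next
      case False
      then have "s * (1 - t) \<le> 0 \<or> s * t / a \<le> 0"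
        using a s by (auto simp: mult_nonneg_nonpos divide_nonpos_pos)
      then show ?thesis using False by (auto simp: chi2_1_density_def arcsine_weight_outside)
    qed
  qed
  finally show ?thesis .
qed

text \<open>Since both summands are nonnegative, the density of \<open>Y1 + a * Y2\<close> vanishes on \<open>s \<le> 0\<close>.\<close>
lemma chi2_1_convolution_nonpos:
  assumes a: "a > 0" and s: "s \<le> 0"
  shows "weighted_convolution chi2_1_density chi2_1_density a s = 0"
proof -
  have "chi2_1_density (s - a * y) * chi2_1_density y = 0" for y
  proof (cases "y > 0")
    case True
    then have "a * y > 0" using a by simp
    then have "s - a * y < 0" using s by linarith
    then show ?thesis by (simp add: chi2_1_density_def)
  qed (simp add: chi2_1_density_def)
  then show ?thesis by (simp only: weighted_convolution_def ennreal_0 nn_integral_0_iff_AE) simp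
qed

lemma chi2_1_weighted_sum_cdf:
  fixes M :: "'s measure" and Y1 Y2 :: "'s \<Rightarrow> real" and a u :: real
  assumes M: "prob_space M" and a: "a > 0" and u: "u > 0"
    and D1: "distributed M lborel Y1 (\<lambda>y. ennreal (chi2_1_density y))"
    and D2: "distributed M lborel Y2 (\<lambda>y. ennreal (chi2_1_density y))"
    and indep: "prob_space.indep_var M borel Y1 borel Y2"
  shows "emeasure M {\<omega> \<in> space M. Y1 \<omega> + a * Y2 \<omega> \<le> u}
           = (\<integral>\<^sup>+t. ennreal (arcsine_weight a t * truncated_exp_integral (mixing_rate a t) u) \<partial>lborel)"
proof -
  have density: "weighted_convolution chi2_1_density chi2_1_density a s * indicator {..u} s
      = (\<integral>\<^sup>+t. ennreal (arcsine_weight a t) * (ennreal (exp (- s * mixing_rate a t)) * indicator {0<..u} s)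
          \<partial>lborel)" for s
  proof (cases "s > 0")
    case True
    then have "weighted_convolution chi2_1_density chi2_1_density a s * indicator {..u} s
        = (\<integral>\<^sup>+t. ennreal (arcsine_weight a t * exp (- s * mixing_rate a t)) \<partial>lborel)
            * indicator {0<..u} s"
      using chi2_1_convolution_pos[OF a True] by (simp add: indicator_def)
    also have "\<dots> = (\<integral>\<^sup>+t. ennreal (arcsine_weight a t * exp (- s * mixing_rate a t))
        * indicator {0<..u} s \<partial>lborel)"
      by (rule nn_integral_multc[symmetric]) measurable
    finally show ?thesis
      using a by (simp add: ennreal_mult arcsine_weight_nonneg mult.assoc)
  qed (simp add: chi2_1_convolution_nonpos[OF a])
  have "emeasure M {\<omega> \<in> space M. Y1 \<omega> + a * Y2 \<omega> \<le> u}
      = (\<integral>\<^sup>+s. \<integral>\<^sup>+t. ennreal (arcsine_weight a t) * (ennreal (exp (- s * mixing_rate a t))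
           * indicator {0<..u} s) \<partial>lborel \<partial>lborel)"
    using cdf_weighted_sum_indep[OF M _ chi2_1_density_nonneg _ chi2_1_density_nonneg D1 D2 indep]
    by (simp add: density)
  also have "\<dots> = (\<integral>\<^sup>+t. \<integral>\<^sup>+s. ennreal (arcsine_weight a t) * (ennreal (exp (- s * mixing_rate a t))
           * indicator {0<..u} s) \<partial>lborel \<partial>lborel)"
    by (rule lborel_pair.Fubini') measurable
  also have "\<dots> = (\<integral>\<^sup>+t. ennreal (arcsine_weight a t * truncated_exp_integral (mixing_rate a t) u) \<partial>lborel)"
  proof (rule nn_integral_cong)
    fix t :: real
    show "(\<integral>\<^sup>+s. ennreal (arcsine_weight a t) * (ennreal (exp (- s * mixing_rate a t))
           * indicator {0<..u} s) \<partial>lborel)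
        = ennreal (arcsine_weight a t * truncated_exp_integral (mixing_rate a t) u)"
    proof (cases "0 < t \<and> t < 1")
      case True
      then have rate: "mixing_rate a t > 0" using mixing_rate_pos a by blast
      then show ?thesis
        using nn_integral_exp_Ioc[OF rate] u a
        by (simp add: nn_integral_cmult ennreal_mult arcsine_weight_nonneg
            truncated_exp_integral_nonneg)
    qed (simp add: arcsine_weight_outside)
  qed
  finally show ?thesis .
qed

lemma mixture_component_concave:
  assumes "a > 0"
  shows "concave_on UNIV (\<lambda>u. arcsine_weight a t * truncated_exp_integral (mixing_rate a t) u)"
proof (cases "0 < t \<and> t < 1")
  case True
  then show ?thesis
    using assms mixing_rate_pos
    by (intro concave_on_cmul truncated_exp_integral_concave arcsine_weight_nonneg) auto
qed (simp add: arcsine_weight_outside concave_on_const)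

theorem mainTheorem11:
  fixes M :: "'s measure" and Y1 Y2 :: "'s \<Rightarrow> real" and a :: real
  assumes "prob_space M"
    and "a > 0"
    and "distributed M lborel Y1 (\<lambda>y. ennreal (chi2_1_density y))"
    and "distributed M lborel Y2 (\<lambda>y. ennreal (chi2_1_density y))"
    and "prob_space.indep_var M borel Y1 borel Y2"
  shows "concave_on {0<..}
           (\<lambda>u. measure M {\<omega> \<in> space M. Y1 \<omega> + a * Y2 \<omega> \<le> u})"
proof (rule concave_on_nn_integral_family[where N = lborel
      and G = "\<lambda>u t. arcsine_weight a t * truncated_exp_integral (mixing_rate a t) u"])
  interpret prob_space M by fact
  fix u :: real assume u: "u \<in> {0<..}"
  show "ennreal (measure M {\<omega> \<in> space M. Y1 \<omega> + a * Y2 \<omega> \<le> u})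
      = (\<integral>\<^sup>+t. ennreal (arcsine_weight a t * truncated_exp_integral (mixing_rate a t) u) \<partial>lborel)"
    using chi2_1_weighted_sum_cdf[OF assms(1,2) _ assms(3-5)] u by (simp add: emeasure_eq_measure)
  show "measure M {\<omega> \<in> space M. Y1 \<omega> + a * Y2 \<omega> \<le> u} \<ge> 0" by simp
  show "(\<lambda>t. arcsine_weight a t * truncated_exp_integral (mixing_rate a t) u) \<in> borel_measurable lborel"
    unfolding truncated_exp_integral_def by measurable
  fix t :: real
  show "arcsine_weight a t * truncated_exp_integral (mixing_rate a t) u \<ge> 0"
    using u \<open>a > 0\<close> mixing_rate_pos
    by (cases "0 < t \<and> t < 1")
      (auto intro!: mult_nonneg_nonneg arcsine_weight_nonneg truncated_exp_integral_nonneg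
        simp: arcsine_weight_outside)
next
  show "concave_on {0<..} (\<lambda>u. arcsine_weight a t * truncated_exp_integral (mixing_rate a t) u)" for t
    using mixture_component_concave[OF \<open>a > 0\<close>] unfolding concave_on_def
    by (rule convex_on_subset) auto
qed simp

end
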